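(* Let $m>1$ and $k$ be positive integers. Then $\mathrm{msum}(mk+1,k)\ge k/2$.
   Context: For positive integers $n>k$, let $S_n$ be the set of permutations $\pi=(\pi_1,\dots,\pi_n)$ of $1,\dots,n$, with cyclic indexing $\pi_{n+i}=\pi_i$, and $s_i=\sum_{j=0}^{k-1}\pi_{i+j}$ for $i=1,\dots,n$. Define $\mathrm{msum}(\pi,k)=\max_{1\le i\le n}s_i-\frac{k(n+1)}{2}$ and $\mathrm{msum}(n,k)=\min_{\pi\in S_n}\mathrm{msum}(\pi,k)$. *)

theory Defs
  imports Complex_Main
begin

text \<open>A permutation \<pi> = (\<pi>_1,...,\<pi>_n) of 1..n is encoded 0-indexed as a function
  p with p i = \<pi>_(i+1) for i < n, a bijection from {0..<n} onto {1..n};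
  values outside {0..<n} are fixed to a default to make the set finite.\<close>

definition perms :: "nat \<Rightarrow> (nat \<Rightarrow> nat) set" where
  "perms n = {p. bij_betw p {0..<n} {1..n} \<and> (\<forall>i. i \<ge> n \<longrightarrow> p i = undefined)}"

definition wsum :: "nat \<Rightarrow> nat \<Rightarrow> (nat \<Rightarrow> nat) \<Rightarrow> nat \<Rightarrow> nat" where
  "wsum n k p i = (\<Sum>j<k. p ((i + j) mod n))"

definition msum_perm :: "nat \<Rightarrow> nat \<Rightarrow> (nat \<Rightarrow> nat) \<Rightarrow> real" where
  "msum_perm n k p = real (Max (wsum n k p ` {0..<n})) - real k * (real n + 1) / 2"

definition msum :: "nat \<Rightarrow> nat \<Rightarrow> real" where
  "msum n k = Min (msum_perm n k ` perms n)"

end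

theory Submission
  imports Defs "HOL-Library.FuncSet" "HOL-Number_Theory.Cong"
begin

text \<open>Let \<open>n = mk + 1\<close> and let \<open>a\<close> be the position of the entry \<open>1\<close>. The \<open>mk\<close> positions
  following \<open>a\<close> cyclically split into \<open>m\<close> consecutive windows of length \<open>k\<close>, which together
  contain every entry except \<open>1\<close>. Hence \<open>m\<close> times the largest window sum is at least
  \<open>n(n+1)/2 - 1 = m k (mk + 3)/2\<close>, i.e. the largest window sum is at least
  \<open>k(mk+3)/2 = k(n+1)/2 + k/2\<close>.\<close>

lemma bij_betw_add_mod:
  fixes c n :: nat
  assumes "n > 0"
  shows "bij_betw (\<lambda>j. (c + j) mod n) {..<n} {..<n}"
proof (rule bij_betw_imageI)
  show inj: "inj_on (\<lambda>j. (c + j) mod n) {..<n}"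
  proof (rule inj_onI)
    fix i j assume "i \<in> {..<n}" "j \<in> {..<n}" "(c + i) mod n = (c + j) mod n"
    then show "i = j" by (metis lessThan_iff cong_def cong_add_lcancel_nat mod_less)
  qed
  show "(\<lambda>j. (c + j) mod n) ` {..<n} = {..<n}"
    using assms by (intro endo_inj_surj inj) auto
qed

lemma sum_rotate_mod:
  fixes n :: nat
  assumes "n > 0"
  shows "(\<Sum>j<n. f ((c + j) mod n)) = (\<Sum>i<n. f i)"
  using sum.reindex_bij_betw[OF bij_betw_add_mod[OF assms], of f c] by simp

lemma sum_windows_skipping_one:
  assumes "a < m * k + 1"
  shows "(\<Sum>t<m. wsum (m*k+1) k p ((a + 1 + t*k) mod (m*k+1))) + p a
           = (\<Sum>i<m*k+1. p i)"
proof -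
  define n where "n = m * k + 1"
  define g where "g j = (a + 1 + j) mod n" for j
  have "(\<Sum>t<m. wsum n k p ((a + 1 + t*k) mod n)) = (\<Sum>t<m. \<Sum>j<k. p (g (t*k + j)))"
    unfolding wsum_def g_def by (simp add: mod_add_left_eq add.assoc)
  also have "\<dots> = (\<Sum>t<m. \<Sum>j\<in>{t*k..<t*k+k}. p (g j))"
  proof (rule sum.cong[OF refl])
    fix t
    show "(\<Sum>j<k. p (g (t*k + j))) = (\<Sum>j\<in>{t*k..<t*k+k}. p (g j))"
      using sum.shift_bounds_nat_ivl[of "\<lambda>j. p (g j)" 0 "t*k" k]
      by (simp add: atLeast0LessThan add.commute)
  qed
  also have "\<dots> = (\<Sum>j<m*k. p (g j))"
    by (rule sum.nat_group)
  finally have windows: "(\<Sum>t<m. wsum n k p ((a + 1 + t*k) mod n)) = (\<Sum>j<m*k. p (g j))" .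
  have "g (m*k) = (a + n) mod n"
    by (simp add: g_def n_def)
  also have "\<dots> = a"
    using assms unfolding n_def[symmetric] by simp
  finally have "g (m*k) = a" .
  then have "(\<Sum>j<m*k. p (g j)) + p a = (\<Sum>j<n. p (g j))"
    by (simp add: n_def)
  also have "\<dots> = (\<Sum>i<n. p i)"
    unfolding g_def by (rule sum_rotate_mod) (simp add: n_def)
  finally show ?thesis
    using windows by (simp add: n_def)
qed

lemma perms_double_sum:
  assumes "p \<in> perms n"
  shows "2 * (\<Sum>i<n. p i) = n * (n + 1)"
proof -
  have "(\<Sum>i<n. p i) = (\<Sum>i\<in>{1..n}. i)"
    using assms sum.reindex_bij_betw[of p "{0..<n}" "{1..n}" "\<lambda>i. i"]
    by (simp add: perms_def lessThan_atLeast0)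
  then show ?thesis
    using double_gauss_sum_from_Suc_0[of n, where 'a = nat] by simp
qed

lemma perms_obtain_one:
  assumes "p \<in> perms n" and "n > 0"
  obtains a where "a < n" and "p a = 1"
proof -
  have "1 \<in> p ` {0..<n}"
    using assms by (auto simp: perms_def bij_betw_def)
  then show ?thesis using that by auto
qed

lemma perms_finite: "finite (perms n)"
proof -
  define extend :: "(nat \<Rightarrow> nat) \<Rightarrow> nat \<Rightarrow> nat"
    where "extend f i = (if i < n then f i else undefined)" for f i
  have "perms n \<subseteq> extend ` ({0..<n} \<rightarrow>\<^sub>E {1..n})"
  proof
    fix p assume "p \<in> perms n"
    then have "restrict p {0..<n} \<in> {0..<n} \<rightarrow>\<^sub>E {1..n}" and "p = extend (restrict p {0..<n})"
      by (auto simp: perms_def bij_betw_def extend_def)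
    then show "p \<in> extend ` ({0..<n} \<rightarrow>\<^sub>E {1..n})" by blast
  qed
  moreover have "finite ({0..<n} \<rightarrow>\<^sub>E {1..n})"
    by (simp add: finite_PiE)
  ultimately show ?thesis
    by (meson finite_surj)
qed

lemma perms_nonempty: "perms n \<noteq> {}"
proof -
  define p where "p i = (if i < n then i + 1 else undefined)" for i
  have "bij_betw (\<lambda>i. i + 1) {0..<n} {1..n}"
    by (rule bij_betw_byWitness[where f'="\<lambda>i. i - 1"]) auto
  then have "bij_betw p {0..<n} {1..n}"
    by (rule bij_betw_cong[THEN iffD1, rotated]) (simp add: p_def)
  then have "p \<in> perms n" by (simp add: perms_def p_def)
  then show ?thesis by blast
qed

lemma msum_perm_ge:
  assumes "m > 0" and p: "p \<in> perms (m*k+1)"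
  shows "msum_perm (m*k+1) k p \<ge> real k / 2"
proof -
  define n where "n = m * k + 1"
  define M where "M = Max (wsum n k p ` {0..<n})"
  obtain a where a: "a < n" "p a = 1"
    using perms_obtain_one[OF p] by (auto simp: n_def)
  define W where "W = (\<Sum>t<m. wsum n k p ((a + 1 + t*k) mod n))"
  have "wsum n k p ((a + 1 + t*k) mod n) \<le> M" for t
    unfolding M_def by (rule Max_ge) (auto simp: n_def)
  then have "W \<le> m * M"
    unfolding W_def using sum_mono[of "{..<m}" _ "\<lambda>_. M"] by simp
  moreover have "2 * (W + 1) = n * (n + 1)"
    using sum_windows_skipping_one[of a m k p] perms_double_sum[OF p] a
    unfolding W_def n_def by simp
  moreover have "n * (n + 1) = m * (k * (m*k + 3)) + 2"
    by (simp add: n_def algebra_simps)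
  ultimately have "m * (k * (m*k + 3)) \<le> m * (2 * M)"
    by (simp add: algebra_simps)
  then have "k * (m*k + 3) \<le> 2 * M"
    using assms(1) by simp
  then have "real (k * (m*k + 3)) \<le> real (2 * M)"
    by (simp only: of_nat_le_iff)
  then show ?thesis
    unfolding msum_perm_def n_def[symmetric] M_def[symmetric] by (simp add: n_def field_simps)
qed

theorem lemma3p1:
  fixes m k :: nat
  assumes "m > 1" and "k > 0"
  shows "msum (m * k + 1) k \<ge> real k / 2"
  unfolding msum_def
proof (rule Min.boundedI)
  show "finite (msum_perm (m * k + 1) k ` perms (m * k + 1))"
    using perms_finite by simp
  show "msum_perm (m * k + 1) k ` perms (m * k + 1) \<noteq> {}"
    using perms_nonempty by simp
  show "real k / 2 \<le> x" if "x \<in> msum_perm (m * k + 1) k ` perms (m * k + 1)" for x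
    using that msum_perm_ge[of m] assms(1) by auto
qed

end
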